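(* Let $3\le n\le m$ and let $G=P_n\square P_m$ be the grid graph. Then every minimal resolving set of $G$ has cardinality at most $2n-2$, and there exists a minimal resolving set of $G$ of cardinality exactly $2n-2$; that is, the largest cardinality of a minimal resolving set of $G$ is $2n-2$.
   Context: The grid graph $P_n\square P_m$ has vertex set $\{(i,j):0\le i\le n-1,\ 0\le j\le m-1\}$, with $(i,j)$ adjacent to $(k,l)$ iff $|i-k|+|j-l|=1$; the distance is $d((i,j),(k,l))=|i-k|+|j-l|$. A vertex $w$ resolves two vertices $u,v$ if $d(w,u)\ne d(w,v)$. A set $R$ of vertices is resolving if every pair of distinct vertices is resolved by some vertex of $R$. A minimal resolving set is a resolving set $R$ such that no $R\setminus\{v\}$, $v\in R$, is resolving. *)

theory Defs
  imports Main
begin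

definition grid_vertices :: "nat \<Rightarrow> nat \<Rightarrow> (nat \<times> nat) set" where
  "grid_vertices n m = {(i, j). i < n \<and> j < m}"

definition grid_dist :: "nat \<times> nat \<Rightarrow> nat \<times> nat \<Rightarrow> nat" where
  "grid_dist u v = nat \<bar>int (fst u) - int (fst v)\<bar> + nat \<bar>int (snd u) - int (snd v)\<bar>"

definition resolves :: "nat \<times> nat \<Rightarrow> nat \<times> nat \<Rightarrow> nat \<times> nat \<Rightarrow> bool" where
  "resolves w u v \<longleftrightarrow> grid_dist w u \<noteq> grid_dist w v"

definition resolving_set :: "nat \<Rightarrow> nat \<Rightarrow> (nat \<times> nat) set \<Rightarrow> bool" where
  "resolving_set n m R \<longleftrightarrow> R \<subseteq> grid_vertices n m \<and>
     (\<forall>u\<in>grid_vertices n m. \<forall>v\<in>grid_vertices n m. u \<noteq> v \<longrightarrow> (\<exists>w\<in>R. resolves w u v))"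

definition minimal_resolving_set :: "nat \<Rightarrow> nat \<Rightarrow> (nat \<times> nat) set \<Rightarrow> bool" where
  "minimal_resolving_set n m R \<longleftrightarrow> resolving_set n m R \<and>
     (\<forall>v\<in>R. \<not> resolving_set n m (R - {v}))"

end

theory Submission
  imports Defs
begin

text \<open>
  A pair of vertices at odd distance is resolved by every vertex, and the resolvers of a pair at
  even distance contain the resolvers of a pair at distance 2 near its midpoint. These basic sets
  are the complements of inner lines and the two regions cut out at the corner of a unit square,
  so a set is resolving iff it meets every basic set, and minimal iff each of its points is the
  only point of the set in some basic set. For a minimal resolving set \<open>R\<close> the middle one of
  three collinear points has no such private basic set, so every line carries at most two points
  of \<open>R\<close>; once \<open>|R| \<ge> 5\<close> the private sets must be diagonal cuts, and then two points on the
  boundary line \<open>fst = 0\<close> and one on \<open>fst = n - 1\<close> would already exhaust \<open>R\<close>. Hence the two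
  boundary lines carry at most two points together and \<open>|R| \<le> 2 + 2 (n - 2)\<close>. A staircase along
  the diagonal together with the far corner is a minimal resolving set of size \<open>2 n - 2\<close>.
\<close>

definition resolvers :: "nat \<times> nat \<Rightarrow> nat \<times> nat \<Rightarrow> (nat \<times> nat) set" where
  "resolvers u v = {w. resolves w u v}"

lemma int_grid_dist:
  "int (grid_dist u v) = \<bar>int (fst u) - int (fst v)\<bar> + \<bar>int (snd u) - int (snd v)\<bar>"
  by (simp add: grid_dist_def)

lemma mem_resolvers_iff:
  "(x, y) \<in> resolvers (a, b) (c, d) \<longleftrightarrow>
     \<bar>int x - int a\<bar> + \<bar>int y - int b\<bar> \<noteq> \<bar>int x - int c\<bar> + \<bar>int y - int d\<bar>"
proof -
  have "(x, y) \<in> resolvers (a, b) (c, d) \<longleftrightarrow>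
      int (grid_dist (x, y) (a, b)) \<noteq> int (grid_dist (x, y) (c, d))"
    by (simp add: resolvers_def resolves_def)
  then show ?thesis
    by (simp only: int_grid_dist fst_conv snd_conv)
qed

lemma resolvers_commute: "resolvers u v = resolvers v u"
  by (auto simp: resolvers_def resolves_def)

lemma resolvers_odd:
  assumes "odd (a + b + c + d)"
  shows "resolvers (a, b) (c, d) = UNIV"
proof -
  have parity: "\<bar>X - A\<bar> + \<bar>Y - B\<bar> \<noteq> \<bar>X - C\<bar> + \<bar>Y - D\<bar>"
    if "odd (A + B + C + D)" for X Y A B C D :: int
  proof
    assume eq: "\<bar>X - A\<bar> + \<bar>Y - B\<bar> = \<bar>X - C\<bar> + \<bar>Y - D\<bar>"
    have "even ((\<bar>X - A\<bar> + \<bar>Y - B\<bar>) + (\<bar>X - C\<bar> + \<bar>Y - D\<bar>)) \<longleftrightarrow> even (A + B + C + D)"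
      by (simp add: abs_if) presburger
    moreover have "even ((\<bar>X - A\<bar> + \<bar>Y - B\<bar>) + (\<bar>X - C\<bar> + \<bar>Y - D\<bar>))"
      unfolding eq by simp
    ultimately show False
      using that by simp
  qed
  have "odd (int a + int b + int c + int d)"
    using assms by (metis even_of_nat of_nat_add)
  then have "(x, y) \<in> resolvers (a, b) (c, d)" for x y
    unfolding mem_resolvers_iff by (rule parity)
  then show ?thesis
    by auto
qed

definition diag_cut :: "nat \<Rightarrow> nat \<Rightarrow> (nat \<times> nat) set" where
  "diag_cut s t = {p. fst p \<le> s \<longleftrightarrow> snd p \<le> t}"

lemma resolvers_diagonal: "resolvers (s, t) (s + 1, t + 1) = diag_cut s t"
  by (auto simp: mem_resolvers_iff diag_cut_def)

lemma resolvers_antidiagonal: "resolvers (s, t + 1) (s + 1, t) = - diag_cut s t"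
  by (auto simp: mem_resolvers_iff diag_cut_def)

lemma resolvers_fst_gap: "resolvers (i, j) (i + 2, j) = {p. fst p \<noteq> i + 1}"
  by (auto simp: mem_resolvers_iff)

lemma resolvers_snd_gap: "resolvers (i, j) (i, j + 2) = {p. snd p \<noteq> j + 1}"
  by (auto simp: mem_resolvers_iff)

lemma fst_gap_subset_resolvers:
  assumes "a \<noteq> c" "a + c = 2 * h"
  shows "{p. fst p \<noteq> h} \<subseteq> resolvers (a, b) (c, b)"
proof -
  have "(x, y) \<in> resolvers (a, b) (c, b)" if "x \<noteq> h" for x y
  proof -
    have "int a + int c = 2 * int h" "int a \<noteq> int c" "int x \<noteq> int h"
      using arg_cong[OF assms(2), of int] assms(1) that by simp_all
    then show ?thesis
      unfolding mem_resolvers_iff by arith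
  qed
  then show ?thesis
    by auto
qed

lemma snd_gap_subset_resolvers:
  assumes "b \<noteq> d" "b + d = 2 * h"
  shows "{p. snd p \<noteq> h} \<subseteq> resolvers (a, b) (a, d)"
proof -
  have "(x, y) \<in> resolvers (a, b) (a, d)" if "y \<noteq> h" for x y
  proof -
    have "int b + int d = 2 * int h" "int b \<noteq> int d" "int y \<noteq> int h"
      using arg_cong[OF assms(2), of int] assms(1) that by simp_all
    then show ?thesis
      unfolding mem_resolvers_iff by arith
  qed
  then show ?thesis
    by auto
qed

lemma diag_cut_subset_resolvers:
  assumes "a \<le> i" "i < c" "b \<le> j" "j < d" "2 * (i + j) + 2 = a + b + c + d"
  shows "diag_cut i j \<subseteq> resolvers (a, b) (c, d)"
  using assms by (auto simp: mem_resolvers_iff diag_cut_def)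

lemma antidiag_cut_subset_resolvers:
  assumes "a \<le> i" "i < c" "d \<le> j" "j < b" "2 * i + b + d = 2 * j + a + c"
  shows "- diag_cut i j \<subseteq> resolvers (a, b) (c, d)"
  using assms by (auto simp: mem_resolvers_iff diag_cut_def)

lemma diag_midpoint_exists:
  fixes a b c d :: nat
  assumes "a < c" "b < d" "a + b + c + d = 2 * k"
  obtains i j where "a \<le> i" "i < c" "b \<le> j" "j < d" "2 * (i + j) + 2 = a + b + c + d"
proof (cases "k \<le> c + b")
  case True
  then show thesis
    using that[of "k - 1 - b" b] assms by auto
next
  case False
  then show thesis
    using that[of "c - 1" "k - c"] assms by auto
qed

lemma antidiag_midpoint_exists:
  fixes a b c d :: nat
  assumes "a < c" "d < b" "a + b + c + d = 2 * k"
  obtains i j where "a \<le> i" "i < c" "d \<le> j" "j < b" "2 * i + b + d = 2 * j + a + c"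
proof (cases "c + d \<le> k")
  case True
  then show thesis
    using that[of a "k - c"] assms by auto
next
  case False
  then show thesis
    using that[of "a + c + d - k" d] assms by auto
qed

text \<open>The basic sets are exactly the sets of resolvers of two grid vertices at distance 2.\<close>

definition basic_set :: "nat \<Rightarrow> nat \<Rightarrow> (nat \<times> nat) set \<Rightarrow> bool" where
  "basic_set n m B \<longleftrightarrow>
     (\<exists>i. 0 < i \<and> i + 1 < n \<and> B = {p. fst p \<noteq> i}) \<or>
     (\<exists>j. 0 < j \<and> j + 1 < m \<and> B = {p. snd p \<noteq> j}) \<or>
     (\<exists>s t. s + 1 < n \<and> t + 1 < m \<and> (B = diag_cut s t \<or> B = - diag_cut s t))"

lemma basic_set_cases:
  assumes "basic_set n m B"
  obtains (fst_gap) i where "0 < i" "i + 1 < n" "B = {p. fst p \<noteq> i}"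
    | (snd_gap) j where "0 < j" "j + 1 < m" "B = {p. snd p \<noteq> j}"
    | (diag) s t where "s + 1 < n" "t + 1 < m" "B = diag_cut s t"
    | (antidiag) s t where "s + 1 < n" "t + 1 < m" "B = - diag_cut s t"
  using assms unfolding basic_set_def by blast

lemma basic_set_fst_gap: "0 < i \<Longrightarrow> i + 1 < n \<Longrightarrow> basic_set n m {p. fst p \<noteq> i}"
  and basic_set_snd_gap: "0 < j \<Longrightarrow> j + 1 < m \<Longrightarrow> basic_set n m {p. snd p \<noteq> j}"
  and basic_set_diag_cut: "s + 1 < n \<Longrightarrow> t + 1 < m \<Longrightarrow> basic_set n m (diag_cut s t)"
  and basic_set_antidiag_cut: "s + 1 < n \<Longrightarrow> t + 1 < m \<Longrightarrow> basic_set n m (- diag_cut s t)"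
  unfolding basic_set_def by blast+

lemma basic_set_eq_resolvers:
  assumes "basic_set n m B" "0 < n" "0 < m"
  obtains u v where "u \<in> grid_vertices n m" "v \<in> grid_vertices n m" "u \<noteq> v" "B = resolvers u v"
  using assms(1)
proof (cases rule: basic_set_cases)
  case (fst_gap i)
  then obtain k where "i = Suc k"
    using gr0_implies_Suc by blast
  with fst_gap assms(3) show thesis
    using resolvers_fst_gap[of k 0]
    by (intro that[of "(k, 0)" "(k + 2, 0)"]) (auto simp: grid_vertices_def)
next
  case (snd_gap j)
  then obtain k where "j = Suc k"
    using gr0_implies_Suc by blast
  with snd_gap assms(2) show thesis
    using resolvers_snd_gap[of 0 k]
    by (intro that[of "(0, k)" "(0, k + 2)"]) (auto simp: grid_vertices_def)
next
  case (diag s t)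
  then show thesis
    using resolvers_diagonal[of s t]
    by (intro that[of "(s, t)" "(s + 1, t + 1)"]) (auto simp: grid_vertices_def)
next
  case (antidiag s t)
  then show thesis
    using resolvers_antidiagonal[of s t]
    by (intro that[of "(s, t + 1)" "(s + 1, t)"]) (auto simp: grid_vertices_def)
qed

lemma basic_set_subset_resolvers:
  assumes "2 \<le> n" "2 \<le> m" "(a, b) \<in> grid_vertices n m" "(c, d) \<in> grid_vertices n m"
    and "(a, b) \<noteq> (c, d)"
  obtains B where "basic_set n m B" "B \<subseteq> resolvers (a, b) (c, d)"
proof (cases "even (a + b + c + d)")
  case False
  from assms(1,2) have "basic_set n m (diag_cut 0 0)"
    by (intro basic_set_diag_cut) simp_all
  then show thesis
    by (rule that) (simp add: resolvers_odd[OF False])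
next
  case even: True
  then obtain k where k: "a + b + c + d = 2 * k"
    by blast
  have grid: "a < n" "b < m" "c < n" "d < m"
    using assms(3,4) by (auto simp: grid_vertices_def)
  consider "a = c" | "b = d" | "a < c" "b < d" | "c < a" "d < b" | "a < c" "d < b" | "c < a" "b < d"
    by (cases a c rule: linorder_cases; cases b d rule: linorder_cases) auto
  then show thesis
  proof cases
    case 1
    with assms(5) have "b \<noteq> d"
      by auto
    moreover from 1 k have h: "b + d = 2 * (k - a)"
      by arith
    ultimately have "0 < k - a" "k - a + 1 < m"
      using grid by arith+
    then have "basic_set n m {p. snd p \<noteq> k - a}"
      by (rule basic_set_snd_gap)
    then show thesis
      by (rule that) (use snd_gap_subset_resolvers[OF \<open>b \<noteq> d\<close> h] 1 in simp)
  next
    case 2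
    with assms(5) have "a \<noteq> c"
      by auto
    moreover from 2 k have h: "a + c = 2 * (k - b)"
      by arith
    ultimately have "0 < k - b" "k - b + 1 < n"
      using grid by arith+
    then have "basic_set n m {p. fst p \<noteq> k - b}"
      by (rule basic_set_fst_gap)
    then show thesis
      by (rule that) (use fst_gap_subset_resolvers[OF \<open>a \<noteq> c\<close> h] 2 in simp)
  next
    case 3
    from 3 k obtain i j where ij: "a \<le> i" "i < c" "b \<le> j" "j < d" "2 * (i + j) + 2 = a + b + c + d"
      by (rule diag_midpoint_exists)
    with grid have "basic_set n m (diag_cut i j)"
      by (intro basic_set_diag_cut) linarith+
    then show thesis
      by (rule that) (rule diag_cut_subset_resolvers[OF ij])
  next
    case 4
    from k have "c + d + a + b = 2 * k"
      by linarith
    with 4 obtain i j where ij: "c \<le> i" "i < a" "d \<le> j" "j < b" "2 * (i + j) + 2 = c + d + a + b"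
      by (rule diag_midpoint_exists)
    with grid have "basic_set n m (diag_cut i j)"
      by (intro basic_set_diag_cut) linarith+
    then show thesis
      by (rule that) (subst resolvers_commute, rule diag_cut_subset_resolvers[OF ij])
  next
    case 5
    from 5 k obtain i j where ij: "a \<le> i" "i < c" "d \<le> j" "j < b" "2 * i + b + d = 2 * j + a + c"
      by (rule antidiag_midpoint_exists)
    with grid have "basic_set n m (- diag_cut i j)"
      by (intro basic_set_antidiag_cut) linarith+
    then show thesis
      by (rule that) (rule antidiag_cut_subset_resolvers[OF ij])
  next
    case 6
    from k have "c + d + a + b = 2 * k"
      by linarith
    with 6 obtain i j where ij: "c \<le> i" "i < a" "b \<le> j" "j < d" "2 * i + d + b = 2 * j + c + a"
      by (rule antidiag_midpoint_exists)
    with grid have "basic_set n m (- diag_cut i j)"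
      by (intro basic_set_antidiag_cut) linarith+
    then show thesis
      by (rule that) (subst resolvers_commute, rule antidiag_cut_subset_resolvers[OF ij])
  qed
qed

lemma resolving_set_iff_meets_basic_sets:
  assumes "2 \<le> n" "2 \<le> m"
  shows "resolving_set n m R \<longleftrightarrow>
    R \<subseteq> grid_vertices n m \<and> (\<forall>B. basic_set n m B \<longrightarrow> R \<inter> B \<noteq> {})"
proof -
  have "(\<forall>u\<in>grid_vertices n m. \<forall>v\<in>grid_vertices n m. u \<noteq> v \<longrightarrow> R \<inter> resolvers u v \<noteq> {})
      \<longleftrightarrow> (\<forall>B. basic_set n m B \<longrightarrow> R \<inter> B \<noteq> {})"
  proof (intro iffI allI impI ballI)
    fix B
    assume resolving: "\<forall>u\<in>grid_vertices n m. \<forall>v\<in>grid_vertices n m. u \<noteq> v \<longrightarrow> R \<inter> resolvers u v \<noteq> {}"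
      and B: "basic_set n m B"
    have "0 < n" "0 < m"
      using assms by simp_all
    with B obtain u v where "u \<in> grid_vertices n m" "v \<in> grid_vertices n m" "u \<noteq> v"
      "B = resolvers u v"
      by (rule basic_set_eq_resolvers)
    with resolving show "R \<inter> B \<noteq> {}"
      by blast
  next
    fix u v
    assume meets: "\<forall>B. basic_set n m B \<longrightarrow> R \<inter> B \<noteq> {}"
      and uv: "u \<in> grid_vertices n m" "v \<in> grid_vertices n m" "u \<noteq> v"
    obtain a b c d where [simp]: "u = (a, b)" "v = (c, d)"
      by (cases u, cases v) simp
    from uv have "(a, b) \<in> grid_vertices n m" "(c, d) \<in> grid_vertices n m" "(a, b) \<noteq> (c, d)"
      by simp_all
    then obtain B where "basic_set n m B" "B \<subseteq> resolvers (a, b) (c, d)"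
      by (rule basic_set_subset_resolvers[OF assms])
    with meets show "R \<inter> resolvers u v \<noteq> {}"
      by auto
  qed
  moreover have "(\<exists>w\<in>R. resolves w u v) \<longleftrightarrow> R \<inter> resolvers u v \<noteq> {}" for u v
    by (auto simp: resolvers_def)
  ultimately show ?thesis
    unfolding resolving_set_def by simp
qed

lemma minimal_resolving_set_private_basic_set:
  assumes "2 \<le> n" "2 \<le> m" "minimal_resolving_set n m R" "w \<in> R"
  obtains B where "basic_set n m B" "R \<inter> B = {w}"
proof -
  have "resolving_set n m R" "\<not> resolving_set n m (R - {w})"
    using assms(3,4) unfolding minimal_resolving_set_def by auto
  then obtain B where "basic_set n m B" "R \<inter> B \<noteq> {}" "(R - {w}) \<inter> B = {}"
    unfolding resolving_set_iff_meets_basic_sets[OF assms(1,2)] by blast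
  moreover from this have "w \<in> B"
    by blast
  ultimately have "basic_set n m B" "R \<inter> B = {w}"
    using assms(4) by blast+
  then show thesis
    by (rule that)
qed

lemma not_in_basic_set_between:
  assumes "basic_set n m B" "a \<notin> B" "c \<notin> B"
    and "fst a = fst b \<and> fst b = fst c \<and> snd a \<le> snd b \<and> snd b \<le> snd c
      \<or> snd a = snd b \<and> snd b = snd c \<and> fst a \<le> fst b \<and> fst b \<le> fst c"
  shows "b \<notin> B"
  using assms(1)
proof (cases rule: basic_set_cases)
qed (use assms(2-4) in \<open>auto simp: diag_cut_def\<close>)

lemma card_le_2_if_no_increasing_triple:
  fixes f :: "'a \<Rightarrow> 'b::linorder"
  assumes "finite S" "inj_on f S"
    and no_triple: "\<And>a b c. a \<in> S \<Longrightarrow> b \<in> S \<Longrightarrow> c \<in> S \<Longrightarrow> f a < f b \<Longrightarrow> f b < f c \<Longrightarrow> False"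
  shows "card S \<le> 2"
proof (cases "S = {}")
  case False
  let ?Y = "f ` S"
  have Y: "finite ?Y" "?Y \<noteq> {}"
    using assms(1) False by auto
  obtain a c where a: "a \<in> S" "f a = Min ?Y" and c: "c \<in> S" "f c = Max ?Y"
    using Min_in[OF Y] Max_in[OF Y] by auto
  have "?Y \<subseteq> {Min ?Y, Max ?Y}"
  proof
    fix y
    assume "y \<in> ?Y"
    then obtain b where b: "b \<in> S" "y = f b"
      by blast
    then have "f a \<le> f b" "f b \<le> f c"
      using a c Min_le[OF Y(1)] Max_ge[OF Y(1)] by simp_all
    show "y \<in> {Min ?Y, Max ?Y}"
    proof (rule ccontr)
      assume "y \<notin> {Min ?Y, Max ?Y}"
      with \<open>f a \<le> f b\<close> \<open>f b \<le> f c\<close> have "f a < f b" "f b < f c"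
        using a c b by auto
      then show False
        by (rule no_triple[OF a(1) b(1) c(1)])
    qed
  qed
  then have "card ?Y \<le> card {Min ?Y, Max ?Y}"
    by (rule card_mono[rotated]) simp
  also have "\<dots> \<le> 2"
    by (cases "Min ?Y = Max ?Y") simp_all
  finally show ?thesis
    using card_image[OF assms(2)] by simp
qed simp

context
  fixes n m :: nat and R :: "(nat \<times> nat) set"
  assumes finite: "finite R"
    and private_basic: "\<And>w. w \<in> R \<Longrightarrow> \<exists>B. basic_set n m B \<and> R \<inter> B = {w}"
begin

lemma private_not_between:
  assumes "a \<in> R" "b \<in> R" "c \<in> R"
    and "fst a = fst b \<and> fst b = fst c \<and> snd a < snd b \<and> snd b < snd c
      \<or> snd a = snd b \<and> snd b = snd c \<and> fst a < fst b \<and> fst b < fst c"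
  shows False
proof -
  obtain B where B: "basic_set n m B" "R \<inter> B = {b}"
    using private_basic assms(2) by blast
  moreover have "a \<noteq> b" "c \<noteq> b"
    using assms(4) by auto
  ultimately have "a \<notin> B" "c \<notin> B" "b \<in> B"
    using assms(1-3) by auto
  with B(1) assms(4) show False
    using not_in_basic_set_between[of n m B a c b] by auto
qed

lemma card_fst_line_le_2: "card (R \<inter> {p. fst p = x}) \<le> 2"
proof (rule card_le_2_if_no_increasing_triple[where f = snd])
  show "finite (R \<inter> {p. fst p = x})"
    using finite by simp
  show "inj_on snd (R \<inter> {p. fst p = x})"
    by (auto simp: inj_on_def prod_eq_iff)
  fix a b c
  assume "a \<in> R \<inter> {p. fst p = x}" "b \<in> R \<inter> {p. fst p = x}" "c \<in> R \<inter> {p. fst p = x}"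
    and "snd a < snd b" "snd b < snd c"
  then show False
    by (intro private_not_between[of a b c]) auto
qed

lemma card_snd_line_le_2: "card (R \<inter> {p. snd p = y}) \<le> 2"
proof (rule card_le_2_if_no_increasing_triple[where f = fst])
  show "finite (R \<inter> {p. snd p = y})"
    using finite by simp
  show "inj_on fst (R \<inter> {p. snd p = y})"
    by (auto simp: inj_on_def prod_eq_iff)
  fix a b c
  assume "a \<in> R \<inter> {p. snd p = y}" "b \<in> R \<inter> {p. snd p = y}" "c \<in> R \<inter> {p. snd p = y}"
    and "fst a < fst b" "fst b < fst c"
  then show False
    by (intro private_not_between[of a b c]) auto
qed

lemma private_diag_cut:
  assumes "5 \<le> card R" "w \<in> R"
  obtains s t where "s + 1 < n" "\<forall>q\<in>R - {w}. q \<in> diag_cut s t \<longleftrightarrow> w \<notin> diag_cut s t"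
proof -
  obtain B where B: "basic_set n m B" "R \<inter> B = {w}"
    using private_basic assms(2) by blast
  then have B_iff: "q \<in> B \<longleftrightarrow> q = w" if "q \<in> R" for q
    using that by auto
  have not_in_line: "\<not> R - {w} \<subseteq> L" if "card (R \<inter> L) \<le> 2" for L
  proof
    assume "R - {w} \<subseteq> L"
    then have "card (R - {w}) \<le> card (R \<inter> L)"
      using finite by (intro card_mono) auto
    with that assms show False
      using finite by (simp add: card_Diff_singleton)
  qed
  from B(1) show thesis
  proof (cases rule: basic_set_cases)
    case (fst_gap i)
    with B_iff have "R - {w} \<subseteq> {p. fst p = i}"
      by auto
    with not_in_line[OF card_fst_line_le_2] show thesis
      by blast
  next
    case (snd_gap j)
    with B_iff have "R - {w} \<subseteq> {p. snd p = j}"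
      by auto
    with not_in_line[OF card_snd_line_le_2] show thesis
      by blast
  next
    case (diag s t)
    show thesis
    proof (rule that)
      show "s + 1 < n"
        by fact
      show "\<forall>q\<in>R - {w}. q \<in> diag_cut s t \<longleftrightarrow> w \<notin> diag_cut s t"
        using B_iff diag(3) assms(2) by auto
    qed
  next
    case (antidiag s t)
    show thesis
    proof (rule that)
      show "s + 1 < n"
        by fact
      show "\<forall>q\<in>R - {w}. q \<in> diag_cut s t \<longleftrightarrow> w \<notin> diag_cut s t"
        using B_iff antidiag(3) assms(2) by auto
    qed
  qed
qed

end

lemma mem_diag_cut_iff_same_fst:
  "fst p = fst q \<Longrightarrow> (p \<in> diag_cut s t \<longleftrightarrow> q \<in> diag_cut s t) \<longleftrightarrow> (snd p \<le> t \<longleftrightarrow> snd q \<le> t)"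
  by (auto simp: diag_cut_def)

lemma mem_diag_cut_iff_opposite_fst:
  "(fst p \<le> s \<longleftrightarrow> \<not> fst q \<le> s) \<Longrightarrow>
    (p \<in> diag_cut s t \<longleftrightarrow> q \<in> diag_cut s t) \<longleftrightarrow> (snd p \<le> t \<longleftrightarrow> \<not> snd q \<le> t)"
  by (auto simp: diag_cut_def)

lemma strictly_between_if_separated_twice:
  fixes a b c t t' :: "'a::linorder"
  assumes "a \<le> t \<longleftrightarrow> \<not> b \<le> t" "c \<le> t \<longleftrightarrow> a \<le> t"
    and "b \<le> t' \<longleftrightarrow> \<not> a \<le> t'" "c \<le> t' \<longleftrightarrow> b \<le> t'"
  shows "a < c \<and> c < b \<or> b < c \<and> c < a"
  using assms by (cases "a \<le> t"; cases "b \<le> t'")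
    (auto simp: not_le dest: order.strict_trans1 order.strict_trans2)

text \<open>
  The cuts isolating \<open>a\<close> and \<open>b\<close> force \<open>snd c\<close> strictly between \<open>snd a\<close> and \<open>snd b\<close>. A cut
  isolating a fourth point puts \<open>a\<close>, \<open>b\<close>, \<open>c\<close> on one side; since \<open>a\<close> and \<open>b\<close> lie on one side of
  its row, so does \<open>c\<close>, while \<open>c\<close> lies on the other side of its column.
\<close>

lemma separated_subset_three:
  assumes separated: "\<And>w. w \<in> R \<Longrightarrow> \<exists>s t. s + 1 < n \<and> (\<forall>q\<in>R - {w}. q \<in> diag_cut s t \<longleftrightarrow> w \<notin> diag_cut s t)"
    and abc: "a \<in> R" "b \<in> R" "c \<in> R" "a \<noteq> b" "fst a = x" "fst b = x" "fst c = y"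
    and apart: "\<And>s. s + 1 < n \<Longrightarrow> x \<le> s \<longleftrightarrow> \<not> y \<le> s"
  shows "R \<subseteq> {a, b, c}"
proof -
  obtain s t where s: "s + 1 < n" and cut_a: "\<forall>q\<in>R - {a}. q \<in> diag_cut s t \<longleftrightarrow> a \<notin> diag_cut s t"
    using separated abc(1) by blast
  obtain s' t' where s': "s' + 1 < n" and cut_b: "\<forall>q\<in>R - {b}. q \<in> diag_cut s' t' \<longleftrightarrow> b \<notin> diag_cut s' t'"
    using separated abc(2) by blast
  have opposite: "fst c \<le> r \<longleftrightarrow> \<not> fst p \<le> r" if "r + 1 < n" "fst p = x" for p r
    using apart[OF that(1)] that(2) abc(7) by blast
  have "c \<noteq> a" "c \<noteq> b"
    using opposite[OF s] abc(5,6) by auto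
  have "snd a \<le> t \<longleftrightarrow> \<not> snd b \<le> t" "snd c \<le> t \<longleftrightarrow> snd a \<le> t"
    using cut_a abc \<open>c \<noteq> a\<close> mem_diag_cut_iff_same_fst[of a b s t]
      mem_diag_cut_iff_opposite_fst[OF opposite[OF s abc(6)], of t] by auto
  moreover have "snd b \<le> t' \<longleftrightarrow> \<not> snd a \<le> t'" "snd c \<le> t' \<longleftrightarrow> snd b \<le> t'"
    using cut_b abc \<open>c \<noteq> b\<close> mem_diag_cut_iff_same_fst[of b a s' t']
      mem_diag_cut_iff_opposite_fst[OF opposite[OF s' abc(5)], of t'] by auto
  ultimately have between: "snd a < snd c \<and> snd c < snd b \<or> snd b < snd c \<and> snd c < snd a"
    by (rule strictly_between_if_separated_twice)
  show ?thesis
  proof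
    fix e
    assume "e \<in> R"
    show "e \<in> {a, b, c}"
    proof (rule ccontr)
      assume "e \<notin> {a, b, c}"
      obtain r u where r: "r + 1 < n" and cut_e: "\<forall>q\<in>R - {e}. q \<in> diag_cut r u \<longleftrightarrow> e \<notin> diag_cut r u"
        using separated \<open>e \<in> R\<close> by blast
      with abc \<open>e \<notin> {a, b, c}\<close> have "a \<in> diag_cut r u \<longleftrightarrow> b \<in> diag_cut r u"
        "c \<in> diag_cut r u \<longleftrightarrow> a \<in> diag_cut r u"
        by auto
      then have "snd a \<le> u \<longleftrightarrow> snd b \<le> u" "snd c \<le> u \<longleftrightarrow> \<not> snd a \<le> u"
        using mem_diag_cut_iff_same_fst[of a b r u] abc(5,6)
          mem_diag_cut_iff_opposite_fst[OF opposite[OF r abc(5)], of u] by auto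
      with between show False
        by auto
    qed
  qed
qed

lemma card_outer_fst_lines_le_2:
  assumes separated: "\<And>w. w \<in> R \<Longrightarrow> \<exists>s t. s + 1 < n \<and> (\<forall>q\<in>R - {w}. q \<in> diag_cut s t \<longleftrightarrow> w \<notin> diag_cut s t)"
    and "4 \<le> card R"
    and line: "\<And>x. card (R \<inter> {p. fst p = x}) \<le> 2"
  shows "card (R \<inter> {p. fst p = 0}) + card (R \<inter> {p. fst p = n - 1}) \<le> 2"
proof -
  have empty: "R \<inter> {p. fst p = y} = {}"
    if apart: "\<And>s. s + 1 < n \<Longrightarrow> x \<le> s \<longleftrightarrow> \<not> y \<le> s" and two: "2 \<le> card (R \<inter> {p. fst p = x})"
    for x y
  proof (rule ccontr)
    assume "R \<inter> {p. fst p = y} \<noteq> {}"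
    then obtain c where c: "c \<in> R" "fst c = y"
      by blast
    obtain T where "T \<subseteq> R \<inter> {p. fst p = x}" "card T = 2"
      using obtain_subset_with_card_n[OF two] by blast
    then obtain a b where "T = {a, b}" "a \<noteq> b"
      unfolding card_2_iff by blast
    with \<open>T \<subseteq> R \<inter> {p. fst p = x}\<close> have "a \<in> R" "b \<in> R" "fst a = x" "fst b = x"
      by auto
    with c \<open>a \<noteq> b\<close> have "R \<subseteq> {a, b, c}"
      by (intro separated_subset_three[OF separated _ _ _ _ _ _ _ apart])
    then have "card R \<le> card {a, b, c}"
      by (rule card_mono[rotated]) simp
    also have "\<dots> \<le> 3"
      by (simp add: card_insert_if)
    finally show False
      using assms(2) by simp
  qed
  have "card (R \<inter> {p. fst p = n - 1}) = 0" if "2 \<le> card (R \<inter> {p. fst p = 0})"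
    using empty[OF _ that, of "n - 1"] by auto
  moreover have "card (R \<inter> {p. fst p = 0}) = 0" if "2 \<le> card (R \<inter> {p. fst p = n - 1})"
    using empty[OF _ that, of 0] by auto
  ultimately show ?thesis
    using line[of 0] line[of "n - 1"] by linarith
qed

lemma sum_le_if_ends_share_bound:
  fixes f :: "nat \<Rightarrow> nat"
  assumes "2 \<le> n" "\<And>x. f x \<le> c" "f 0 + f (n - 1) \<le> c"
  shows "(\<Sum>x<n. f x) \<le> c * (n - 1)"
proof -
  define k where "k = n - 2"
  have n: "n = Suc (Suc k)"
    unfolding k_def using assms(1) by arith
  have "(\<Sum>x<n. f x) = f 0 + (\<Sum>x<k. f (Suc x)) + f (n - 1)"
    unfolding n by (subst sum.lessThan_Suc) (subst sum.lessThan_Suc_shift, simp)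
  also have "\<dots> \<le> c + c * k"
  proof -
    have "(\<Sum>x<k. f (Suc x)) \<le> c * k"
      using sum_bounded_above[of "{..<k}" "\<lambda>x. f (Suc x)" c] assms(2) by (simp add: mult.commute)
    with assms(3) show ?thesis
      by linarith
  qed
  finally show ?thesis
    unfolding n by simp
qed

lemma finite_grid_vertices: "finite (grid_vertices n m)"
proof -
  have "grid_vertices n m = {..<n} \<times> {..<m}"
    by (auto simp: grid_vertices_def)
  then show ?thesis
    by simp
qed

lemma card_minimal_resolving_set_le:
  assumes "3 \<le> n" "2 \<le> m" "minimal_resolving_set n m R"
  shows "card R \<le> 2 * n - 2"
proof (cases "card R \<le> 4")
  case True
  then show ?thesis
    using assms(1) by linarith
next
  case False
  have nm: "2 \<le> n" "2 \<le> m"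
    using assms(1,2) by simp_all
  have grid: "R \<subseteq> grid_vertices n m"
    using assms(3) unfolding minimal_resolving_set_def resolving_set_def by blast
  then have finite: "finite R"
    using finite_grid_vertices by (rule finite_subset)
  have private_basic: "\<exists>B. basic_set n m B \<and> R \<inter> B = {w}" if w: "w \<in> R" for w
  proof -
    obtain B where "basic_set n m B" "R \<inter> B = {w}"
      by (rule minimal_resolving_set_private_basic_set[OF nm assms(3) w])
    then show ?thesis
      by blast
  qed
  have separated: "\<exists>s t. s + 1 < n \<and> (\<forall>q\<in>R - {w}. q \<in> diag_cut s t \<longleftrightarrow> w \<notin> diag_cut s t)"
    if w: "w \<in> R" for w
  proof -
    from False have "5 \<le> card R"
      by simp
    obtain s t where "s + 1 < n" "\<forall>q\<in>R - {w}. q \<in> diag_cut s t \<longleftrightarrow> w \<notin> diag_cut s t"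
      by (rule private_diag_cut[OF finite private_basic \<open>5 \<le> card R\<close> w])
    then show ?thesis
      by blast
  qed
  have line: "card (R \<inter> {p. fst p = x}) \<le> 2" for x
    by (rule card_fst_line_le_2[OF finite private_basic])
  have "(\<Union>x<n. R \<inter> {p. fst p = x}) = R"
    using grid by (auto simp: grid_vertices_def)
  then have "card R \<le> (\<Sum>x<n. card (R \<inter> {p. fst p = x}))"
    using card_UN_le[of "{..<n}" "\<lambda>x. R \<inter> {p. fst p = x}"] by simp
  also have "\<dots> \<le> 2 * (n - 1)"
    using card_outer_fst_lines_le_2[OF separated _ line] False nm
    by (intro sum_le_if_ends_share_bound) (auto intro: line)
  finally show ?thesis
    by simp
qed

text \<open>
  The staircase \<open>(1, 0), (1, 1), (2, 1), \<dots>, (n - 1, n - 2)\<close> meets every antidiagonal cut, and the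
  far corner meets every other basic set.
\<close>

definition staircase :: "nat \<Rightarrow> nat \<Rightarrow> (nat \<times> nat) set" where
  "staircase n m =
    (\<lambda>k. (k + 1, k)) ` {..<n - 1} \<union> (\<lambda>k. (k + 1, k + 1)) ` {..<n - 2} \<union> {(n - 1, m - 1)}"

context
  fixes n m :: nat
  assumes n: "2 \<le> n" and nm: "n \<le> m"
begin

lemma card_staircase: "card (staircase n m) = 2 * n - 2"
proof -
  let ?A = "(\<lambda>k. (k + 1, k)) ` {..<n - 1}" and ?B = "(\<lambda>k. (k + 1, k + 1)) ` {..<n - 2}"
  have "card ?A = n - 1" "card ?B = n - 2"
    by (simp_all add: card_image inj_on_def)
  moreover have "?A \<inter> ?B = {}" "(?A \<union> ?B) \<inter> {(n - 1, m - 1)} = {}"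
    using nm by auto
  ultimately have "card (?A \<union> ?B \<union> {(n - 1, m - 1)}) = (n - 1) + (n - 2) + 1"
    by (simp add: card_Un_disjoint)
  then show ?thesis
    unfolding staircase_def using n by simp
qed

lemma staircase_subset_grid_vertices: "staircase n m \<subseteq> grid_vertices n m"
  using n nm by (auto simp: staircase_def grid_vertices_def)

lemma staircase_meets_basic_set:
  assumes "basic_set n m B"
  shows "staircase n m \<inter> B \<noteq> {}"
proof -
  have corner: "(n - 1, m - 1) \<in> staircase n m"
    by (simp add: staircase_def)
  from assms show ?thesis
  proof (cases rule: basic_set_cases)
    case (fst_gap i)
    then have "(n - 1, m - 1) \<in> B"
      by (simp; arith)
    with corner show ?thesis
      by blast
  next
    case (snd_gap j)
    then have "(n - 1, m - 1) \<in> B"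
      by (simp; arith)
    with corner show ?thesis
      by blast
  next
    case (diag s t)
    then have "(n - 1, m - 1) \<in> B"
      by (simp add: diag_cut_def; arith)
    with corner show ?thesis
      by blast
  next
    case (antidiag s t)
    show ?thesis
    proof (cases "t < s")
      case True
      define k where "k = s - 1"
      have s: "s = k + 1"
        unfolding k_def using True by arith
      with antidiag(1) have "(s, s) \<in> (\<lambda>k. (k + 1, k + 1)) ` {..<n - 2}"
        by (intro image_eqI[where x = k]) simp_all
      moreover from True antidiag(3) have "(s, s) \<in> B"
        by (simp add: diag_cut_def)
      ultimately show ?thesis
        unfolding staircase_def by blast
    next
      case False
      from antidiag(1) have "(s + 1, s) \<in> (\<lambda>k. (k + 1, k)) ` {..<n - 1}"
        by (intro image_eqI[where x = s]) simp_all
      moreover from False antidiag(3) have "(s + 1, s) \<in> B"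
        by (simp add: diag_cut_def)
      ultimately show ?thesis
        unfolding staircase_def by blast
    qed
  qed
qed

lemma staircase_minus_misses_basic_set:
  assumes "w \<in> staircase n m"
  obtains B where "basic_set n m B" "(staircase n m - {w}) \<inter> B = {}"
proof -
  from assms consider (lower) k where "k < n - 1" "w = (k + 1, k)"
    | (upper) k where "k < n - 2" "w = (k + 1, k + 1)"
    | (corner) "w = (n - 1, m - 1)"
    unfolding staircase_def by blast
  then show thesis
  proof cases
    case (lower k)
    with nm have "basic_set n m (- diag_cut k k)"
      by (intro basic_set_antidiag_cut) linarith+
    moreover have "(staircase n m - {w}) \<inter> - diag_cut k k = {}"
      using lower nm by (auto simp: staircase_def diag_cut_def)
    ultimately show thesis
      by (rule that)
  next
    case (upper k)
    with nm have "basic_set n m (- diag_cut (k + 1) k)"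
      by (intro basic_set_antidiag_cut) linarith+
    moreover have "(staircase n m - {w}) \<inter> - diag_cut (k + 1) k = {}"
      using upper nm by (auto simp: staircase_def diag_cut_def)
    ultimately show thesis
      by (rule that)
  next
    case corner
    from n nm have "basic_set n m (diag_cut 0 (n - 2))"
      by (intro basic_set_diag_cut) linarith+
    moreover have "(staircase n m - {w}) \<inter> diag_cut 0 (n - 2) = {}"
      using corner n nm by (auto simp: staircase_def diag_cut_def)
    ultimately show thesis
      by (rule that)
  qed
qed

lemma minimal_resolving_set_staircase: "minimal_resolving_set n m (staircase n m)"
proof -
  have nm2: "2 \<le> m"
    using n nm by linarith
  note resolving_iff = resolving_set_iff_meets_basic_sets[OF n nm2]
  have "resolving_set n m (staircase n m)"
    unfolding resolving_iff using staircase_subset_grid_vertices staircase_meets_basic_set by blast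
  moreover have "\<not> resolving_set n m (staircase n m - {w})" if w: "w \<in> staircase n m" for w
  proof -
    obtain B where "basic_set n m B" "(staircase n m - {w}) \<inter> B = {}"
      by (rule staircase_minus_misses_basic_set[OF w])
    then show ?thesis
      unfolding resolving_iff by blast
  qed
  ultimately show ?thesis
    unfolding minimal_resolving_set_def by blast
qed

end

theorem theorem5:
  fixes n m :: nat
  assumes "3 \<le> n" and "n \<le> m"
  shows "(\<forall>R. minimal_resolving_set n m R \<longrightarrow> card R \<le> 2 * n - 2)
       \<and> (\<exists>R. minimal_resolving_set n m R \<and> card R = 2 * n - 2)"
proof
  from assms have n: "2 \<le> n" and m: "2 \<le> m"
    by simp_all
  show "\<forall>R. minimal_resolving_set n m R \<longrightarrow> card R \<le> 2 * n - 2"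
    using card_minimal_resolving_set_le[OF assms(1) m] by blast
  show "\<exists>R. minimal_resolving_set n m R \<and> card R = 2 * n - 2"
    using minimal_resolving_set_staircase[OF n assms(2)] card_staircase[OF n assms(2)] by blast
qed

end
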